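(* Let $n\ge2$ and let $G$ be a finite simple graph with $n$ vertices. Then $s(\{\rho(B)\}*\{I(G)\})\subseteq 2\mathbb{Z}$ for every connected bipartite graph $B$ with $n$ vertices if and only if every vertex of $G$ has even degree (i.e. every connected component of $G$ is Eulerian). In the notation of orthogonality classes: $I^{-1}\big(\rho(\{\text{connected bipartite graphs on } n \text{ vertices}\})^{\perp_{\mathscr P(2\mathbb Z)}}\big)$ is exactly the set of graphs on $n$ vertices all of whose components are Eulerian.
   Context: Take $R=\mathbb{Z}$. An $R$-weighted complete graph $K$ is a finite vertex set with a weight $v_K(e)\in R$ on every 2-subset $e$. For $H,G'$ with equal vertex counts and a bijection $f:V(H)\to V(G')$, $H*_fG'$ has vertex set $V(H)$ and weights $v_H(\{x,y\})v_{G'}(\{f(x),f(y)\})$; $H*G'=\{H*_fG': f \text{ bijection}\}$. $s(K)=\sum_e v_K(e)$, $s(\mathscr K)=\{s(K):K\in\mathscr K\}$. For a simple graph $G$, $I(G)$ has weight $1$ on edges and $0$ on non-edges; for connected $B$, $\rho(B)$ has weight $\rho_B(x,y)$ (graph distance). For a set $\mathscr H$ of weighted complete graphs on $n$ vertices and a family $\mathscr A$ of subsets of $\mathbb Z$, $\mathscr H^{\perp_{\mathscr A}}$ is the class of weighted complete graphs $X$ on $n$ vertices with $s(H*X)\in\mathscr A$ for all $H\in\mathscr H$; $\mathscr P(2\mathbb Z)$ is the family of all subsets of the even integers; $I^{-1}$ of a class means the simple graphs $G$ with $I(G)$ in that class. *)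

theory Defs
  imports Main
begin

definition pairs :: "'a set \<Rightarrow> 'a set set" where
  "pairs V = {e. e \<subseteq> V \<and> card e = 2}"

definition simple_graph :: "'a set \<Rightarrow> 'a set set \<Rightarrow> bool" where
  "simple_graph V E \<longleftrightarrow> finite V \<and> E \<subseteq> pairs V"

definition walk :: "'a set set \<Rightarrow> 'a list \<Rightarrow> bool" where
  "walk E xs \<longleftrightarrow> xs \<noteq> [] \<and> (\<forall>i. Suc i < length xs \<longrightarrow> {xs ! i, xs ! Suc i} \<in> E)"

definition connected_graph :: "'a set \<Rightarrow> 'a set set \<Rightarrow> bool" where
  "connected_graph V E \<longleftrightarrow>
     (\<forall>x\<in>V. \<forall>y\<in>V. \<exists>xs. walk E xs \<and> hd xs = x \<and> last xs = y)"

definition bipartite :: "'a set \<Rightarrow> 'a set set \<Rightarrow> bool" where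
  "bipartite V E \<longleftrightarrow> (\<exists>A. A \<subseteq> V \<and> (\<forall>e\<in>E. card (e \<inter> A) = 1))"

definition degree :: "'a set set \<Rightarrow> 'a \<Rightarrow> nat" where
  "degree E v = card {e \<in> E. v \<in> e}"

text \<open>Weighted complete graphs on a vertex set V: weights on 2-subsets, 'a set => int.\<close>

definition I_w :: "'a set set \<Rightarrow> 'a set \<Rightarrow> int" where
  "I_w E e = (if e \<in> E then 1 else 0)"

definition rho_w :: "'a set set \<Rightarrow> 'a set \<Rightarrow> int" where
  "rho_w E e = int (LEAST k. \<exists>xs. walk E xs \<and> {hd xs, last xs} = e \<and> length xs = Suc k)"

definition wsum :: "'a set \<Rightarrow> ('a set \<Rightarrow> int) \<Rightarrow> int" where
  "wsum V w = (\<Sum>e\<in>pairs V. w e)"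

definition wprod_f :: "('a set \<Rightarrow> int) \<Rightarrow> ('b set \<Rightarrow> int) \<Rightarrow> ('a \<Rightarrow> 'b) \<Rightarrow> 'a set \<Rightarrow> int" where
  "wprod_f H G f = (\<lambda>e. H e * G (f ` e))"

definition wprod :: "'a set \<Rightarrow> 'b set \<Rightarrow> ('a set \<Rightarrow> int) \<Rightarrow> ('b set \<Rightarrow> int) \<Rightarrow> ('a set \<Rightarrow> int) set" where
  "wprod V W H G = {wprod_f H G f | f. bij_betw f V W}"

end

theory Submission
  imports Defs
begin

text \<open>Let \<open>A\<close> be one side of a bipartition of a connected bipartite graph \<open>B\<close>. Every walk
  alternates sides, so \<open>\<rho>(x, y)\<close> is odd exactly when the 2-set \<open>{x, y}\<close> meets \<open>A\<close> in one
  vertex. Hence, modulo 2, the sum of \<open>\<rho>(e) \<cdot> I(G)(f e)\<close> counts the edges of \<open>G\<close> that meet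
  \<open>f(A)\<close> in one vertex, which by double counting is congruent to the degree sum over \<open>f(A)\<close>.
  This is even when all degrees are even; conversely the star centred at a vertex \<open>v\<close>, with
  \<open>A = {v}\<close> and \<open>f = id\<close>, yields the degree of \<open>v\<close>.\<close>

lemma walk_Cons_Cons: "walk E (x # y # ys) \<longleftrightarrow> {x, y} \<in> E \<and> walk E (y # ys)"
proof
  assume "walk E (x # y # ys)"
  then have step: "\<And>i. Suc i < length (x # y # ys) \<Longrightarrow> {(x # y # ys) ! i, (x # y # ys) ! Suc i} \<in> E"
    unfolding walk_def by blast
  have "walk E (y # ys)"
    unfolding walk_def using step[of "Suc _"] by simp
  then show "{x, y} \<in> E \<and> walk E (y # ys)"
    using step[of 0] by simp
next
  assume "{x, y} \<in> E \<and> walk E (y # ys)"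
  then show "walk E (x # y # ys)"
    unfolding walk_def by (auto simp: nth_Cons split: nat.split)
qed

lemma walk_singleton: "walk E [x]"
  by (simp add: walk_def)

lemma card_doubleton_Int_even_iff:
  "x \<noteq> y \<Longrightarrow> even (card ({x, y} \<inter> A)) \<longleftrightarrow> (x \<in> A \<longleftrightarrow> y \<in> A)"
  by (cases "x \<in> A"; cases "y \<in> A") (auto simp: Int_insert_left)

lemma walk_length_parity:
  assumes edges: "\<forall>e\<in>E. card e = 2 \<and> card (e \<inter> A) = 1" and "walk E xs"
  shows "even (length xs - 1) \<longleftrightarrow> (hd xs \<in> A \<longleftrightarrow> last xs \<in> A)"
  using \<open>walk E xs\<close>
proof (induction xs rule: induct_list012)
  case 1
  then show ?case by (simp add: walk_def)
next
  case (2 x)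
  then show ?case by simp
next
  case (3 x y ys)
  from "3.prems" have "{x, y} \<in> E" and walk: "walk E (y # ys)"
    by (simp_all add: walk_Cons_Cons)
  with edges have "card {x, y} = 2" and "card ({x, y} \<inter> A) = 1"
    by blast+
  then have "x \<in> A \<longleftrightarrow> y \<notin> A"
    using card_doubleton_Int_even_iff[of x y A] by (cases "x = y") auto
  with "3.IH"(2)[OF walk] show ?case
    by auto
qed

lemma even_rho_w_iff:
  assumes "EB \<subseteq> pairs W" and "connected_graph W EB" and "\<forall>e\<in>EB. card (e \<inter> A) = 1"
    and "e \<in> pairs W"
  shows "even (rho_w EB e) \<longleftrightarrow> even (card (e \<inter> A))"
proof -
  from \<open>e \<in> pairs W\<close> obtain x y where e: "e = {x, y}" "x \<noteq> y" "x \<in> W" "y \<in> W"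
    unfolding pairs_def by (auto simp: card_2_iff)
  from \<open>connected_graph W EB\<close> e obtain xs where "walk EB xs" "hd xs = x" "last xs = y"
    unfolding connected_graph_def by blast
  then have "\<exists>k xs. walk EB xs \<and> {hd xs, last xs} = e \<and> length xs = Suc k"
    using e by (intro exI[of _ "length xs - 1"] exI[of _ xs]) (auto simp: walk_def)
  from LeastI_ex[OF this] obtain ys
    where ys: "walk EB ys" "{hd ys, last ys} = {x, y}" "length ys = Suc (nat (rho_w EB e))"
    unfolding rho_w_def e by auto
  have "\<forall>e\<in>EB. card e = 2 \<and> card (e \<inter> A) = 1"
    using assms(1,3) by (auto simp: pairs_def)
  from walk_length_parity[OF this ys(1)] ys(2,3)
  have "even (rho_w EB e) \<longleftrightarrow> (x \<in> A \<longleftrightarrow> y \<in> A)"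
    by (auto simp: doubleton_eq_iff rho_w_def)
  with e show ?thesis
    using card_doubleton_Int_even_iff[of x y A] by simp
qed

lemma bij_betw_image_pairs:
  assumes "bij_betw f W V"
  shows "bij_betw ((`) f) (pairs W) (pairs V)"
proof -
  have inj: "inj_on f W" and fW: "f ` W = V"
    using assms by (auto simp: bij_betw_def)
  have card_image_subset: "card (f ` d) = card d" if "d \<subseteq> W" for d
    using card_image inj_on_subset[OF inj that] by blast
  have "inj_on ((`) f) (pairs W)"
    by (rule inj_on_subset[OF inj_on_image_Pow[OF inj]]) (auto simp: pairs_def)
  moreover have "(`) f ` pairs W \<subseteq> pairs V"
    using fW card_image_subset by (auto simp: pairs_def)
  moreover have "e \<in> (`) f ` pairs W" if "e \<in> pairs V" for e
  proof -
    let ?d = "inv_into W f ` e"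
    have "e \<subseteq> V" "card e = 2"
      using that by (auto simp: pairs_def)
    then have "?d \<subseteq> W" "f ` ?d = e"
      using fW by (auto intro: inv_into_into simp: image_inv_into_cancel)
    moreover from this have "card ?d = 2"
      using card_image_subset \<open>card e = 2\<close> by metis
    ultimately show ?thesis
      unfolding pairs_def by (intro image_eqI[of _ _ ?d]) auto
  qed
  ultimately show ?thesis
    by (auto simp: bij_betw_def)
qed

lemma even_sum_cong:
  "(\<And>x. x \<in> A \<Longrightarrow> even (f x :: int) \<longleftrightarrow> even (g x)) \<Longrightarrow> even (sum f A) \<longleftrightarrow> even (sum g A)"
  by (induction A rule: infinite_finite_induct) auto

lemma sum_mult_I_w:
  assumes "finite P" and "E \<subseteq> P"
  shows "(\<Sum>e\<in>P. g e * I_w E e) = (\<Sum>e\<in>E. g e)"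
proof -
  have "(\<Sum>e\<in>P. g e * I_w E e) = (\<Sum>e\<in>E. g e * I_w E e)"
    using assms by (intro sum.mono_neutral_right) (auto simp: I_w_def)
  then show ?thesis
    by (simp add: I_w_def)
qed

lemma sum_card_Int_eq_sum_degree:
  assumes "finite E" and "finite A"
  shows "(\<Sum>e\<in>E. int (card (e \<inter> A))) = (\<Sum>a\<in>A. int (degree E a))"
proof -
  have "(\<Sum>e\<in>E. int (card (e \<inter> A))) = (\<Sum>e\<in>E. \<Sum>a\<in>A. if a \<in> e then 1 else 0)"
    using assms(2) by (intro sum.cong) (simp_all add: sum.inter_filter[symmetric] Int_def conj_commute)
  also have "\<dots> = (\<Sum>a\<in>A. \<Sum>e\<in>E. if a \<in> e then 1 else 0)"
    by (rule sum.swap)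
  also have "\<dots> = (\<Sum>a\<in>A. int (degree E a))"
    using assms(1) by (intro sum.cong) (simp_all add: sum.inter_filter[symmetric] degree_def)
  finally show ?thesis .
qed

lemma finite_pairs: "finite V \<Longrightarrow> finite (pairs V)"
  by (rule finite_subset[of _ "Pow V"]) (auto simp: pairs_def)

lemma even_wsum_wprod_f_iff:
  assumes "finite V" and "E \<subseteq> pairs V"
    and "EB \<subseteq> pairs W" and "connected_graph W EB" and "A \<subseteq> W" and "\<forall>e\<in>EB. card (e \<inter> A) = 1"
    and f: "bij_betw f W V"
  shows "even (wsum W (wprod_f (rho_w EB) (I_w E) f)) \<longleftrightarrow> even (\<Sum>a\<in>f ` A. int (degree E a))"
proof -
  have inj: "inj_on f W" and fW: "f ` W = V"
    using f by (auto simp: bij_betw_def)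
  have finE: "finite E"
    using finite_subset[OF assms(2) finite_pairs[OF assms(1)]] .
  have "f ` A \<subseteq> V"
    using \<open>A \<subseteq> W\<close> fW by blast
  then have finA: "finite (f ` A)"
    using \<open>finite V\<close> by (rule finite_subset)
  let ?g = "\<lambda>e'. int (card (e' \<inter> f ` A)) * I_w E e'"
  have "even (rho_w EB e * I_w E (f ` e)) \<longleftrightarrow> even (?g (f ` e))" if "e \<in> pairs W" for e
  proof -
    have "e \<subseteq> W"
      using that by (simp add: pairs_def)
    then have "f ` e \<inter> f ` A = f ` (e \<inter> A)"
      using inj \<open>A \<subseteq> W\<close> by (simp add: inj_on_image_Int)
    moreover have "inj_on f (e \<inter> A)"
      using inj by (rule inj_on_subset) (use \<open>A \<subseteq> W\<close> in blast)
    ultimately have "card (f ` e \<inter> f ` A) = card (e \<inter> A)"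
      by (simp add: card_image)
    then show ?thesis
      using even_rho_w_iff[OF assms(3,4,6) that] by simp
  qed
  then have "even (wsum W (wprod_f (rho_w EB) (I_w E) f)) \<longleftrightarrow> even (\<Sum>e\<in>pairs W. ?g (f ` e))"
    unfolding wsum_def wprod_f_def by (rule even_sum_cong)
  also have "(\<Sum>e\<in>pairs W. ?g (f ` e)) = (\<Sum>e'\<in>pairs V. ?g e')"
    by (rule sum.reindex_bij_betw[OF bij_betw_image_pairs[OF f]])
  also have "\<dots> = (\<Sum>e\<in>E. int (card (e \<inter> f ` A)))"
    using finite_pairs[OF \<open>finite V\<close>] \<open>E \<subseteq> pairs V\<close> by (rule sum_mult_I_w)
  also have "\<dots> = (\<Sum>a\<in>f ` A. int (degree E a))"
    using finE finA by (rule sum_card_Int_eq_sum_degree)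
  finally show ?thesis .
qed

definition star_edges :: "'a set \<Rightarrow> 'a \<Rightarrow> 'a set set" where
  "star_edges V v = {{v, u} | u. u \<in> V \<and> u \<noteq> v}"

lemma star_edges_subset_pairs: "v \<in> V \<Longrightarrow> star_edges V v \<subseteq> pairs V"
  by (auto simp: star_edges_def pairs_def)

lemma card_star_edges_Int_centre: "\<forall>e\<in>star_edges V v. card (e \<inter> {v}) = 1"
  by (auto simp: star_edges_def)

lemma connected_star_edges:
  assumes "v \<in> V"
  shows "connected_graph V (star_edges V v)"
  unfolding connected_graph_def
proof (intro ballI)
  fix x y
  assume "x \<in> V" "y \<in> V"
  have edge: "{u, v} \<in> star_edges V v" "{v, u} \<in> star_edges V v" if "u \<in> V" "u \<noteq> v" for u
    using that by (auto simp: star_edges_def insert_commute)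
  consider "x = y" | "x \<noteq> y" "x = v \<or> y = v" | "x \<noteq> v" "y \<noteq> v"
    by blast
  then show "\<exists>xs. walk (star_edges V v) xs \<and> hd xs = x \<and> last xs = y"
  proof cases
    case 1
    then show ?thesis
      using walk_singleton by fastforce
  next
    case 2
    then show ?thesis
      using \<open>x \<in> V\<close> \<open>y \<in> V\<close> edge
      by (intro exI[of _ "[x, y]"]) (auto simp: walk_Cons_Cons walk_singleton)
  next
    case 3
    then show ?thesis
      using \<open>x \<in> V\<close> \<open>y \<in> V\<close> edge
      by (intro exI[of _ "[x, v, y]"]) (simp add: walk_Cons_Cons walk_singleton)
  qed
qed

lemma bipartite_star_edges: "v \<in> V \<Longrightarrow> bipartite V (star_edges V v)"
  unfolding bipartite_def using card_star_edges_Int_centre[of V v] by (intro exI[of _ "{v}"]) auto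

lemma even_degree_if_star_sums_even:
  assumes "finite V" and "E \<subseteq> pairs V" and "v \<in> V"
    and "wsum V ` wprod V V (rho_w (star_edges V v)) (I_w E) \<subseteq> {k. even k}"
  shows "even (degree E v)"
proof -
  have "{v} \<subseteq> V"
    using \<open>v \<in> V\<close> by simp
  then have "even (wsum V (wprod_f (rho_w (star_edges V v)) (I_w E) id))
      \<longleftrightarrow> even (\<Sum>a\<in>id ` {v}. int (degree E a))"
    using card_star_edges_Int_centre
    by (rule even_wsum_wprod_f_iff[OF assms(1,2) star_edges_subset_pairs[OF assms(3)]
          connected_star_edges[OF assms(3)]]) (rule bij_betw_id)
  moreover have "wprod_f (rho_w (star_edges V v)) (I_w E) id \<in> wprod V V (rho_w (star_edges V v)) (I_w E)"
    unfolding wprod_def by (auto intro: bij_betw_id)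
  ultimately show ?thesis
    using assms(4) by auto
qed

lemma even_wsum_wprod_if_even_degrees:
  assumes "finite V" and "E \<subseteq> pairs V" and "\<forall>v\<in>V. even (degree E v)"
    and "EB \<subseteq> pairs W" and "connected_graph W EB" and "bipartite W EB"
  shows "wsum W ` wprod W V (rho_w EB) (I_w E) \<subseteq> {k. even k}"
proof
  fix k
  assume "k \<in> wsum W ` wprod W V (rho_w EB) (I_w E)"
  then obtain f where f: "bij_betw f W V" and k: "k = wsum W (wprod_f (rho_w EB) (I_w E) f)"
    unfolding wprod_def by blast
  from \<open>bipartite W EB\<close> obtain A where A: "A \<subseteq> W" "\<forall>e\<in>EB. card (e \<inter> A) = 1"
    unfolding bipartite_def by blast
  have "f ` A \<subseteq> V"
    using A(1) bij_betw_imp_surj_on[OF f] by blast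
  then have "even (\<Sum>a\<in>f ` A. int (degree E a))"
    using assms(3) by (intro dvd_sum) auto
  then show "k \<in> {k. even k}"
    using even_wsum_wprod_f_iff[OF assms(1,2,4,5) A f] k by simp
qed

theorem mainTheorem20:
  fixes V :: "'a set" and E :: "'a set set"
  assumes "simple_graph V E" and "card V \<ge> 2"
  shows "(\<forall>(W::'a set) EB. simple_graph W EB \<and> card W = card V \<and> connected_graph W EB \<and> bipartite W EB
            \<longrightarrow> wsum W ` wprod W V (rho_w EB) (I_w E) \<subseteq> {k. even k})
         \<longleftrightarrow> (\<forall>v\<in>V. even (degree E v))"
proof -
  have V: "finite V" "E \<subseteq> pairs V"
    using assms(1) by (auto simp: simple_graph_def)
  have "even (degree E v)"
    if all_even: "\<forall>(W::'a set) EB. simple_graph W EB \<and> card W = card V \<and> connected_graph W EB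
        \<and> bipartite W EB \<longrightarrow> wsum W ` wprod W V (rho_w EB) (I_w E) \<subseteq> {k. even k}"
      and "v \<in> V" for v
  proof (rule even_degree_if_star_sums_even[OF V \<open>v \<in> V\<close>])
    have "simple_graph V (star_edges V v)"
      using V star_edges_subset_pairs[OF \<open>v \<in> V\<close>] by (simp add: simple_graph_def)
    then show "wsum V ` wprod V V (rho_w (star_edges V v)) (I_w E) \<subseteq> {k. even k}"
      using spec[OF spec[OF all_even, of V], of "star_edges V v"]
        connected_star_edges[OF \<open>v \<in> V\<close>] bipartite_star_edges[OF \<open>v \<in> V\<close>] by simp
  qed
  moreover have "wsum W ` wprod W V (rho_w EB) (I_w E) \<subseteq> {k. even k}"
    if "\<forall>v\<in>V. even (degree E v)" and "simple_graph W EB" "connected_graph W EB" "bipartite W EB"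
    for W EB
    using that(2) by (intro even_wsum_wprod_if_even_degrees[OF V that(1) _ that(3,4)])
      (simp add: simple_graph_def)
  ultimately show ?thesis
    by blast
qed

end
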